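(* Let $(\mathbf{x}_i,y_i)_{i=1}^n\subset\mathbb{R}^d\times\{\pm1\}$ satisfy $\|\mathbf{x}_i\|\le1$ and $y_i\mathbf{x}_i^\top\mathbf{w}_*\ge\gamma$ for some $\gamma>0$ and unit vector $\mathbf{w}_*$. Let $L(\mathbf{w})=\frac1n\sum_i\ln(1+\exp(-y_i\mathbf{x}_i^\top\mathbf{w}))$ and run GD $\mathbf{w}_{t+1}=\mathbf{w}_t-\eta\nabla L(\mathbf{w}_t)$ with any $\eta>0$ and any $\mathbf{w}_0$. For any $\mathbf{u}_1\in\mathbb{R}^d$, let $\mathbf{u}_2=\frac{\eta}{2\gamma}\mathbf{w}_*$ and $\mathbf{u}=\mathbf{u}_1+\mathbf{u}_2$. Then for all $t\ge1$, \[\frac{\|\mathbf{w}_t-\mathbf{u}\|^2}{2\eta t}+\frac1t\sum_{k=0}^{t-1}L(\mathbf{w}_k)\le L(\mathbf{u}_1)+\frac{\|\mathbf{w}_0-\mathbf{u}\|^2}{2\eta t}.\] *)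

theory Defs
  imports "HOL-Analysis.Analysis"
begin

definition logistic_loss :: "nat \<Rightarrow> (nat \<Rightarrow> 'a::euclidean_space) \<Rightarrow> (nat \<Rightarrow> real) \<Rightarrow> 'a \<Rightarrow> real" where
  "logistic_loss n x y w = (1 / real n) * (\<Sum>i<n. ln (1 + exp (- (y i * (x i \<bullet> w)))))"

end

theory Submission
  imports Defs
begin

(* Shifting the comparator by u2 = (eta / (2 gamma)) wstar makes the usual one-step analysis of
   gradient descent work for every step size. By the margin, the gradient G has inner product at
   most -gamma S with wstar, where S is the average of the logistic weights -l'(y_i x_i . w) in
   [0, 1], while |G| <= S and hence |G|^2 <= S. So the cross term 2 eta G . u2 <= -eta^2 S cancels
   the second-order term eta^2 |G|^2, and convexity of the loss turns the remaining term into the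
   regret L(w_k) - L(u1). Telescoping over k < t gives the bound. *)

definition scalar_logistic_loss :: "real \<Rightarrow> real" where
  "scalar_logistic_loss z = ln (1 + exp (- z))"

definition scalar_logistic_deriv :: "real \<Rightarrow> real" where
  "scalar_logistic_deriv z = - 1 / (1 + exp z)"

lemma has_real_derivative_scalar_logistic_loss:
  "(scalar_logistic_loss has_real_derivative scalar_logistic_deriv z) (at z)"
proof -
  have "(scalar_logistic_loss has_real_derivative (exp (- z) * - 1) / (1 + exp (- z))) (at z)"
    unfolding scalar_logistic_loss_def
    by (auto intro!: derivative_eq_intros simp: add_pos_pos)
  also have "(exp (- z) * - 1) / (1 + exp (- z)) = scalar_logistic_deriv z"
    unfolding scalar_logistic_deriv_def by (simp add: exp_minus field_simps)
  finally show ?thesis .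
qed

lemma scalar_logistic_deriv_bounds: "- 1 \<le> scalar_logistic_deriv z" "scalar_logistic_deriv z \<le> 0"
  unfolding scalar_logistic_deriv_def by (auto simp: add_pos_pos)

lemma scalar_logistic_loss_above_tangent:
  "scalar_logistic_loss b - scalar_logistic_loss a \<ge> scalar_logistic_deriv a * (b - a)"
proof -
  have "convex_on UNIV scalar_logistic_loss"
    by (rule convex_on_realI[OF _ has_real_derivative_scalar_logistic_loss])
       (auto simp: scalar_logistic_deriv_def frac_le add_pos_pos)
  then show ?thesis
    by (rule convex_on_imp_above_tangent) (auto intro: has_real_derivative_scalar_logistic_loss)
qed

lemma gradient_step_distance_le:
  fixes w g u v :: "'a::real_inner"
  assumes "eta \<ge> 0" and "2 * (g \<bullet> v) + eta * (norm g)\<^sup>2 \<le> 0"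
  shows "(norm (w - eta *\<^sub>R g - (u + v)))\<^sup>2 \<le> (norm (w - (u + v)))\<^sup>2 - 2 * eta * (g \<bullet> (w - u))"
proof -
  have "(norm (w - eta *\<^sub>R g - (u + v)))\<^sup>2
      = (norm (w - (u + v)))\<^sup>2 - 2 * eta * (g \<bullet> (w - u)) + eta * (2 * (g \<bullet> v) + eta * (norm g)\<^sup>2)"
    by (simp add: power2_norm_eq_inner inner_diff_left inner_diff_right inner_add_left
        inner_add_right inner_commute algebra_simps)
  also have "\<dots> \<le> (norm (w - (u + v)))\<^sup>2 - 2 * eta * (g \<bullet> (w - u))"
    using assms by (simp add: mult_nonneg_nonpos)
  finally show ?thesis .
qed

lemma telescoping_regret_bound:
  fixes D f :: "nat \<Rightarrow> real"
  assumes "\<And>k. k < m \<Longrightarrow> D (Suc k) \<le> D k - a * (f k - c)"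
  shows "D m + a * (\<Sum>k<m. f k) \<le> D 0 + a * real m * c"
proof -
  have "D m - D 0 = (\<Sum>k<m. D (Suc k) - D k)"
    by (rule sum_lessThan_telescope[symmetric])
  also have "\<dots> \<le> (\<Sum>k<m. a * c - a * f k)"
    using assms by (intro sum_mono) (simp add: algebra_simps)
  finally show ?thesis
    by (simp add: sum_subtractf sum_distrib_left algebra_simps)
qed

definition logistic_loss_grad :: "nat \<Rightarrow> (nat \<Rightarrow> 'a::euclidean_space) \<Rightarrow> (nat \<Rightarrow> real) \<Rightarrow> 'a \<Rightarrow> 'a" where
  "logistic_loss_grad n x y w =
     (1 / real n) *\<^sub>R (\<Sum>i<n. (scalar_logistic_deriv (y i * (x i \<bullet> w)) * y i) *\<^sub>R x i)"

definition logistic_grad_mass :: "nat \<Rightarrow> (nat \<Rightarrow> 'a::euclidean_space) \<Rightarrow> (nat \<Rightarrow> real) \<Rightarrow> 'a \<Rightarrow> real" where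
  "logistic_grad_mass n x y w = (1 / real n) * (\<Sum>i<n. - scalar_logistic_deriv (y i * (x i \<bullet> w)))"

lemma logistic_loss_eq_scalar:
  "logistic_loss n x y w = (1 / real n) * (\<Sum>i<n. scalar_logistic_loss (y i * (x i \<bullet> w)))"
  unfolding logistic_loss_def scalar_logistic_loss_def by simp

lemma inner_logistic_loss_grad:
  "logistic_loss_grad n x y w \<bullet> v
     = (1 / real n) * (\<Sum>i<n. scalar_logistic_deriv (y i * (x i \<bullet> w)) * (y i * (x i \<bullet> v)))"
  unfolding logistic_loss_grad_def by (simp add: inner_sum_left algebra_simps)

lemma has_derivative_logistic_loss:
  "(logistic_loss n x y has_derivative (\<lambda>h. logistic_loss_grad n x y w \<bullet> h)) (at w)"
proof -
  have "((\<lambda>v. scalar_logistic_loss (y i * (x i \<bullet> v))) has_derivative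
          (\<lambda>h. (y i * (x i \<bullet> h)) * scalar_logistic_deriv (y i * (x i \<bullet> w)))) (at w)" for i
    by (rule DERIV_compose_FDERIV[OF has_real_derivative_scalar_logistic_loss])
       (auto intro!: derivative_eq_intros)
  then have "((\<lambda>v. (1 / real n) * (\<Sum>i<n. scalar_logistic_loss (y i * (x i \<bullet> v)))) has_derivative
          (\<lambda>h. (1 / real n) * (\<Sum>i<n. (y i * (x i \<bullet> h)) * scalar_logistic_deriv (y i * (x i \<bullet> w)))))
          (at w)"
    by (intro has_derivative_mult_right has_derivative_sum)
  then show ?thesis
    by (simp add: logistic_loss_eq_scalar[abs_def] inner_logistic_loss_grad ac_simps)
qed

lemma logistic_loss_above_tangent:
  "logistic_loss n x y u - logistic_loss n x y w \<ge> logistic_loss_grad n x y w \<bullet> (u - w)"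
proof -
  have "(\<Sum>i<n. scalar_logistic_deriv (y i * (x i \<bullet> w)) * (y i * (x i \<bullet> (u - w))))
      \<le> (\<Sum>i<n. scalar_logistic_loss (y i * (x i \<bullet> u)) - scalar_logistic_loss (y i * (x i \<bullet> w)))"
    using scalar_logistic_loss_above_tangent
    by (intro sum_mono) (simp add: inner_diff_right right_diff_distrib)
  then have "(1 / real n) * (\<Sum>i<n. scalar_logistic_deriv (y i * (x i \<bullet> w)) * (y i * (x i \<bullet> (u - w))))
      \<le> (1 / real n) * (\<Sum>i<n. scalar_logistic_loss (y i * (x i \<bullet> u)))
        - (1 / real n) * (\<Sum>i<n. scalar_logistic_loss (y i * (x i \<bullet> w)))"
    by (simp add: sum_subtractf divide_right_mono flip: diff_divide_distrib)
  then show ?thesis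
    by (simp only: logistic_loss_eq_scalar inner_logistic_loss_grad)
qed

lemma logistic_grad_mass_bounds:
  assumes "n \<ge> 1"
  shows "0 \<le> logistic_grad_mass n x y w" "logistic_grad_mass n x y w \<le> 1"
proof -
  have "(\<Sum>i<n. - scalar_logistic_deriv (y i * (x i \<bullet> w))) \<le> (\<Sum>i<n. 1)"
    using scalar_logistic_deriv_bounds by (intro sum_mono) auto
  then show "logistic_grad_mass n x y w \<le> 1"
    unfolding logistic_grad_mass_def using assms by (simp add: divide_le_eq)
  show "0 \<le> logistic_grad_mass n x y w"
    unfolding logistic_grad_mass_def using scalar_logistic_deriv_bounds
    by (intro mult_nonneg_nonneg sum_nonneg) auto
qed

lemma norm_logistic_loss_grad_le_mass:
  assumes "\<And>i. i < n \<Longrightarrow> y i \<in> {-1, 1}" and "\<And>i. i < n \<Longrightarrow> norm (x i) \<le> 1"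
  shows "norm (logistic_loss_grad n x y w) \<le> logistic_grad_mass n x y w"
proof -
  have "norm (\<Sum>i<n. (scalar_logistic_deriv (y i * (x i \<bullet> w)) * y i) *\<^sub>R x i)
      \<le> (\<Sum>i<n. norm ((scalar_logistic_deriv (y i * (x i \<bullet> w)) * y i) *\<^sub>R x i))"
    by (rule norm_sum)
  also have "\<dots> \<le> (\<Sum>i<n. - scalar_logistic_deriv (y i * (x i \<bullet> w)))"
  proof (rule sum_mono)
    fix i assume "i \<in> {..<n}"
    then have i: "i < n" by simp
    have "\<bar>y i\<bar> = 1" using assms(1)[OF i] by auto
    moreover have "norm (x i) \<le> 1" using assms(2)[OF i] .
    moreover have "\<bar>scalar_logistic_deriv (y i * (x i \<bullet> w))\<bar> = - scalar_logistic_deriv (y i * (x i \<bullet> w))"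
      using scalar_logistic_deriv_bounds(2) by simp
    ultimately show "norm ((scalar_logistic_deriv (y i * (x i \<bullet> w)) * y i) *\<^sub>R x i)
        \<le> - scalar_logistic_deriv (y i * (x i \<bullet> w))"
      using mult_left_le[of "norm (x i)" "\<bar>scalar_logistic_deriv (y i * (x i \<bullet> w))\<bar>"]
      by (simp add: abs_mult)
  qed
  finally show ?thesis
    unfolding logistic_loss_grad_def logistic_grad_mass_def by (simp add: divide_right_mono)
qed

lemma inner_logistic_loss_grad_margin:
  assumes "\<And>i. i < n \<Longrightarrow> y i * (x i \<bullet> wstar) \<ge> gamma"
  shows "logistic_loss_grad n x y w \<bullet> wstar \<le> - gamma * logistic_grad_mass n x y w"
proof -
  have "(\<Sum>i<n. scalar_logistic_deriv (y i * (x i \<bullet> w)) * (y i * (x i \<bullet> wstar)))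
      \<le> (\<Sum>i<n. scalar_logistic_deriv (y i * (x i \<bullet> w)) * gamma)"
    using assms scalar_logistic_deriv_bounds(2) by (intro sum_mono mult_left_mono_neg) auto
  then have "(1 / real n) * (\<Sum>i<n. scalar_logistic_deriv (y i * (x i \<bullet> w)) * (y i * (x i \<bullet> wstar)))
      \<le> (1 / real n) * (\<Sum>i<n. scalar_logistic_deriv (y i * (x i \<bullet> w)) * gamma)"
    by (simp add: divide_right_mono)
  then show ?thesis
    unfolding inner_logistic_loss_grad logistic_grad_mass_def
    by (simp add: sum_negf sum_distrib_left ac_simps)
qed

lemma logistic_loss_grad_margin_dominates_norm:
  assumes "n \<ge> 1"
    and "\<And>i. i < n \<Longrightarrow> y i \<in> {-1, 1}" and "\<And>i. i < n \<Longrightarrow> norm (x i) \<le> 1"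
    and "\<And>i. i < n \<Longrightarrow> y i * (x i \<bullet> wstar) \<ge> gamma"
    and "gamma > 0" and "eta \<ge> 0"
  shows "2 * (logistic_loss_grad n x y w \<bullet> ((eta / (2 * gamma)) *\<^sub>R wstar))
           + eta * (norm (logistic_loss_grad n x y w))\<^sup>2 \<le> 0"
proof -
  define G where "G = logistic_loss_grad n x y w"
  define S where "S = logistic_grad_mass n x y w"
  have S: "0 \<le> S" "S \<le> 1"
    unfolding S_def using logistic_grad_mass_bounds[OF assms(1)] by auto
  have "(norm G)\<^sup>2 \<le> S\<^sup>2"
    unfolding G_def S_def using norm_logistic_loss_grad_le_mass[OF assms(2,3)]
    by (intro power_mono) auto
  also have "\<dots> \<le> S"
    using S by (simp add: power2_eq_square mult_left_le)
  finally have "eta * (norm G)\<^sup>2 \<le> eta * S"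
    using assms(6) by (intro mult_left_mono)
  moreover have "2 * (G \<bullet> ((eta / (2 * gamma)) *\<^sub>R wstar)) \<le> - eta * S"
  proof -
    have "(eta / gamma) * (G \<bullet> wstar) \<le> (eta / gamma) * (- gamma * S)"
      unfolding G_def S_def using assms
      by (intro mult_left_mono inner_logistic_loss_grad_margin) auto
    then show ?thesis using assms(5) by simp
  qed
  ultimately show ?thesis unfolding G_def by linarith
qed

theorem mainTheorem10:
  fixes n :: nat and x :: "nat \<Rightarrow> 'a::euclidean_space" and y :: "nat \<Rightarrow> real"
    and wstar u1 :: 'a and gamma eta :: real
    and w g :: "nat \<Rightarrow> 'a" and t :: nat
  assumes n_pos: "n \<ge> 1"
    and labels: "\<And>i. i < n \<Longrightarrow> y i \<in> {-1, 1}"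
    and norm_x: "\<And>i. i < n \<Longrightarrow> norm (x i) \<le> 1"
    and gamma_pos: "gamma > 0"
    and unit: "norm wstar = 1"
    and margin: "\<And>i. i < n \<Longrightarrow> y i * (x i \<bullet> wstar) \<ge> gamma"
    and eta_pos: "eta > 0"
    and grad: "\<And>k. (logistic_loss n x y has_derivative (\<lambda>h. g k \<bullet> h)) (at (w k))"
    and gd: "\<And>k. w (Suc k) = w k - eta *\<^sub>R g k"
    and t_pos: "t \<ge> 1"
  shows "(norm (w t - (u1 + (eta / (2 * gamma)) *\<^sub>R wstar)))\<^sup>2 / (2 * eta * real t)
           + (1 / real t) * (\<Sum>k<t. logistic_loss n x y (w k))
         \<le> logistic_loss n x y u1
           + (norm (w 0 - (u1 + (eta / (2 * gamma)) *\<^sub>R wstar)))\<^sup>2 / (2 * eta * real t)"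
proof -
  define L where "L = logistic_loss n x y"
  define D where "D k = (norm (w k - (u1 + (eta / (2 * gamma)) *\<^sub>R wstar)))\<^sup>2" for k
  have g_eq: "g k = logistic_loss_grad n x y (w k)" for k
    using has_derivative_unique[OF grad has_derivative_logistic_loss] by (metis vector_eq_rdot)
  have "D (Suc k) \<le> D k - 2 * eta * (L (w k) - L u1)" for k
  proof -
    have "D (Suc k) \<le> D k - 2 * eta * (g k \<bullet> (w k - u1))"
      unfolding D_def gd g_eq using eta_pos
      by (intro gradient_step_distance_le logistic_loss_grad_margin_dominates_norm
          n_pos labels norm_x margin gamma_pos) auto
    also have "\<dots> \<le> D k - 2 * eta * (L (w k) - L u1)"
      using logistic_loss_above_tangent[of n x y "w k" u1] eta_pos
      by (simp add: L_def g_eq inner_diff_right)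
    finally show ?thesis .
  qed
  then have "D t + 2 * eta * (\<Sum>k<t. L (w k)) \<le> D 0 + 2 * eta * real t * L u1"
    by (intro telescoping_regret_bound)
  then have "(D t + 2 * eta * (\<Sum>k<t. L (w k))) / (2 * eta * real t)
      \<le> (D 0 + 2 * eta * real t * L u1) / (2 * eta * real t)"
    using eta_pos by (simp add: divide_right_mono)
  then show ?thesis
    using eta_pos t_pos unfolding D_def L_def by (simp add: add_divide_distrib)
qed

end
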